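(* There is a universal constant $C>0$ such that the following holds. Let $\mu$ be an isotropic log-concave probability measure on $\mathbb{R}$, let $f:\mathbb{R}\to\mathbb{R}$ be a polynomial of degree $d$, and let $k\in\{1,\dots,d\}$ be an integer. Then for every $t\in\mathbb{R}\setminus\{0\}$, \[\left|\int_{\{x\in\mathbb{R}:|f^{(k)}(x)|\ge1\}}e^{\mathrm{i}tf(x)}\,d\mu(x)\right|\le C\,dk\,|t|^{-1/k}.\]
   Context: Isotropic: mean $0$, variance $1$; log-concave: density $e^{-\varphi}$ with $\varphi$ convex. $f^{(k)}$ denotes the $k$-th derivative of $f$. *)

theory Defs
  imports "HOL-Probability.Probability" "HOL-Computational_Algebra.Polynomial"
begin

text \<open>A log-concave measure on the real line: it has a density e^(-phi) with respect to
  Lebesgue measure, where phi is a convex function with values in (-infinity, +infinity];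
  we represent phi by a real-valued convex function on its (convex) effective domain S,
  the density being 0 outside S.\<close>
definition log_concave_measure :: "real measure \<Rightarrow> bool" where
  "log_concave_measure \<mu> \<longleftrightarrow>
     (\<exists>S \<phi>. convex S \<and> convex_on S \<phi> \<and>
        \<mu> = density lborel (\<lambda>x. ennreal (indicator S x * exp (- \<phi> x))))"

definition isotropic :: "real measure \<Rightarrow> bool" where
  "isotropic \<mu> \<longleftrightarrow> prob_space \<mu> \<and> sets \<mu> = sets borel \<and>
     integrable \<mu> (\<lambda>x. x) \<and> integrable \<mu> (\<lambda>x. x\<^sup>2) \<and>
     (\<integral>x. x \<partial>\<mu>) = 0 \<and> (\<integral>x. x\<^sup>2 \<partial>\<mu>) = 1"

end

(* Write mu = rho dx with rho = exp (- phi) on a convex set. If rho x0 = m > 0, the superlevel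
   set {rho > m/e} is an interval through x0 of length at most e/m (Markov), and convexity of phi
   propagates this to the tail bound rho x <= 4096 e^4 / (m^3 (x - x0)^4) for |x - x0| >= 2e/m;
   since the second moment about x0 is 1 + x0^2 >= 1, this forces m <= 400. By the layer-cake
   formula the integral against mu is then an average over s in (0, 400) of integrals over the
   intervals {rho > s}, so it suffices to bound the Lebesgue integral of e^(itf) over
   A = {|f^(k)| >= 1} intersected with an arbitrary interval. Cut the interval at the at most 5d real
   roots of f^(k) -+ 1, f' -+ L and f'' with L = |t|^(-(k-1)/k). On each cell, either A is
   negligible; or |f'| < L, and a (k-1)-fold finite difference of f' shows that the cell has length
   at most 2k |t|^(-1/k); or |f'| >= L with f' monotone, and van der Corput's first-derivative test
   gives the bound 4 / (|t| L) = 4 |t|^(-1/k). *)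

theory Submission
  imports Defs "HOL-Real_Asymp.Real_Asymp"
begin

section \<open>Finite differences and the sublevel estimate\<close>

definition forward_diff :: "real \<Rightarrow> real poly \<Rightarrow> real poly" where
  "forward_diff h g = pcompose g [:h, 1:] - g"

lemma poly_forward_diff: "poly (forward_diff h g) x = poly g (x + h) - poly g x"
  by (simp add: forward_diff_def poly_pcompose add.commute)

lemma pderiv_forward_diff: "pderiv (forward_diff h g) = forward_diff h (pderiv g)"
  by (simp add: forward_diff_def pderiv_diff pderiv_pcompose pderiv_pCons)

lemma higher_pderiv_forward_diff:
  "(pderiv ^^ n) (forward_diff h g) = forward_diff h ((pderiv ^^ n) g)"
  by (induction n) (auto simp: pderiv_forward_diff)

lemma forward_diff_iter_bound:
  assumes "h \<ge> 0" "\<forall>x\<in>{a..a + real n * h}. \<bar>poly g x\<bar> \<le> L"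
  shows "\<bar>poly ((forward_diff h ^^ n) g) a\<bar> \<le> 2 ^ n * L"
  using assms(2)
proof (induction n arbitrary: g L)
  case 0
  then show ?case using assms(1) by auto
next
  case (Suc n)
  have "\<forall>x\<in>{a..a + real n * h}. \<bar>poly (forward_diff h g) x\<bar> \<le> 2 * L"
  proof
    fix x assume x: "x \<in> {a..a + real n * h}"
    have "x \<in> {a..a + real (Suc n) * h}" "x + h \<in> {a..a + real (Suc n) * h}"
      using x assms(1) by (auto simp: algebra_simps)
    then have "\<bar>poly g x\<bar> \<le> L" "\<bar>poly g (x + h)\<bar> \<le> L" using Suc.prems by auto
    then show "\<bar>poly (forward_diff h g) x\<bar> \<le> 2 * L" by (simp add: poly_forward_diff)
  qed
  from Suc.IH[OF this] show ?case
    by (simp add: funpow_Suc_right del: funpow.simps)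
qed

lemma forward_diff_iter_mean_value:
  assumes "h \<ge> 0"
  shows "\<exists>\<xi>\<in>{a..a + real n * h}.
           poly ((forward_diff h ^^ n) g) a = h ^ n * poly ((pderiv ^^ n) g) \<xi>"
proof (induction n arbitrary: g)
  case 0
  then show ?case by auto
next
  case (Suc n)
  obtain \<eta> where \<eta>: "\<eta> \<in> {a..a + real n * h}"
    "poly ((forward_diff h ^^ n) (forward_diff h g)) a
       = h ^ n * poly ((pderiv ^^ n) (forward_diff h g)) \<eta>"
    using Suc.IH[of "forward_diff h g"] by blast
  define p where "p = (pderiv ^^ n) g"
  have diff: "poly ((forward_diff h ^^ Suc n) g) a = h ^ n * (poly p (\<eta> + h) - poly p \<eta>)"
    using \<eta>(2) by (simp add: funpow_Suc_right higher_pderiv_forward_diff poly_forward_diff p_def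
        del: funpow.simps)
  show ?case
  proof (cases "h = 0")
    case True
    then show ?thesis using diff \<eta>(1) by (intro bexI[of _ \<eta>]) auto
  next
    case False
    then have "\<eta> < \<eta> + h" using assms by auto
    from poly_MVT[OF this, of p] obtain \<xi> where \<xi>: "\<eta> < \<xi>" "\<xi> < \<eta> + h"
      "poly p (\<eta> + h) - poly p \<eta> = h * poly (pderiv p) \<xi>" by auto
    have "\<xi> \<in> {a..a + real (Suc n) * h}" using \<xi> \<eta>(1) by (auto simp: algebra_simps)
    moreover have "pderiv p = (pderiv ^^ Suc n) g" by (simp add: p_def)
    ultimately show ?thesis using diff \<xi>(3) by (intro bexI[of _ \<xi>]) (auto simp: algebra_simps)
  qed
qed

lemma poly_sublevel_interval_length:
  assumes n: "n \<ge> 1" and ab: "a \<le> b"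
    and small: "\<forall>x\<in>{a..b}. \<bar>poly g x\<bar> \<le> L"
    and large: "\<forall>x\<in>{a..b}. 1 \<le> \<bar>poly ((pderiv ^^ n) g) x\<bar>"
  shows "b - a \<le> 2 * real n * L powr (1 / real n)"
proof -
  define h where "h = (b - a) / real n"
  have h: "h \<ge> 0" "a + real n * h = b" using n ab by (simp_all add: h_def)
  have L: "L \<ge> 0" using small ab by force
  obtain \<xi> where \<xi>: "\<xi> \<in> {a..b}"
    "poly ((forward_diff h ^^ n) g) a = h ^ n * poly ((pderiv ^^ n) g) \<xi>"
    using forward_diff_iter_mean_value[OF h(1), of a n g] h(2) by auto
  have "h ^ n * 1 \<le> h ^ n * \<bar>poly ((pderiv ^^ n) g) \<xi>\<bar>"
    using large \<xi>(1) h(1) by (intro mult_left_mono) auto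
  also have "\<dots> = \<bar>poly ((forward_diff h ^^ n) g) a\<bar>" using \<xi>(2) h(1) by (simp add: abs_mult)
  also have "\<dots> \<le> 2 ^ n * L" using forward_diff_iter_bound[OF h(1), of a n g L] small h(2) by auto
  finally have "h ^ n \<le> 2 ^ n * L" by simp
  then have "(h ^ n) powr (1 / real n) \<le> (2 ^ n * L) powr (1 / real n)"
    using h(1) by (intro powr_mono2) auto
  moreover have "(h ^ n) powr (1 / real n) = h"
    using h(1) n by (cases "h = 0") (simp_all add: powr_realpow[symmetric] powr_powr)
  ultimately have "h \<le> 2 * L powr (1 / real n)"
    using L n by (simp add: powr_mult powr_realpow[symmetric] powr_powr)
  then show ?thesis using n by (simp add: h_def field_simps)
qed

section \<open>Van der Corput's first-derivative test\<close>

lemma integral_abs_pderiv_div_square_le: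
  fixes p :: "real poly"
  assumes ce: "c \<le> e" and L: "L > 0" and large: "\<forall>x\<in>{c..e}. L \<le> \<bar>poly p x\<bar>"
    and sign: "(\<forall>x\<in>{c..e}. 0 \<le> poly (pderiv p) x) \<or> (\<forall>x\<in>{c..e}. poly (pderiv p) x \<le> 0)"
  shows "(\<lambda>x. \<bar>poly (pderiv p) x\<bar> / (poly p x)\<^sup>2) integrable_on {c..e}"
    and "integral {c..e} (\<lambda>x. \<bar>poly (pderiv p) x\<bar> / (poly p x)\<^sup>2) \<le> 2 / L"
proof -
  obtain s :: real where s: "\<bar>s\<bar> = 1" "\<forall>x\<in>{c..e}. \<bar>poly (pderiv p) x\<bar> = s * poly (pderiv p) x"
  proof (cases "\<forall>x\<in>{c..e}. 0 \<le> poly (pderiv p) x")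
    case True
    then show ?thesis by (intro that[of 1]) auto
  next
    case False
    then show ?thesis using sign by (intro that[of "-1"]) auto
  qed
  have nz: "poly p x \<noteq> 0" if "x \<in> {c..e}" for x using large L that by force
  define H where "H x = - s / poly p x" for x
  have "(H has_real_derivative \<bar>poly (pderiv p) x\<bar> / (poly p x)\<^sup>2) (at x)" if "x \<in> {c..e}" for x
    unfolding H_def using nz[OF that] s(2) that
    by (auto intro!: derivative_eq_intros simp: power2_eq_square)
  then have FTC: "((\<lambda>x. \<bar>poly (pderiv p) x\<bar> / (poly p x)\<^sup>2) has_integral (H e - H c)) {c..e}"
    using ce by (intro fundamental_theorem_of_calculus)
      (auto simp: has_real_derivative_iff_has_vector_derivative[symmetric]
        intro: has_field_derivative_at_within)
  then show "(\<lambda>x. \<bar>poly (pderiv p) x\<bar> / (poly p x)\<^sup>2) integrable_on {c..e}" by blast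
  have "\<bar>H x\<bar> \<le> 1 / L" if "x \<in> {c..e}" for x
    using large that L s(1) unfolding H_def abs_divide abs_minus_cancel by (intro frac_le) auto
  from this[of c] this[of e] have "H e - H c \<le> 2 / L" using ce by simp
  then show "integral {c..e} (\<lambda>x. \<bar>poly (pderiv p) x\<bar> / (poly p x)\<^sup>2) \<le> 2 / L"
    using integral_unique[OF FTC] by simp
qed

lemma integral_comp_poly_by_parts:
  fixes f :: "real poly" and u v :: "real \<Rightarrow> real"
  assumes v: "\<And>y. (v has_real_derivative u y) (at y)" and u_cont: "continuous_on UNIV u"
    and ce: "c \<le> e" and t: "t \<noteq> 0" and nz: "\<forall>x\<in>{c..e}. poly (pderiv f) x \<noteq> 0"
  defines "G \<equiv> \<lambda>x. v (t * poly f x) / (t * poly (pderiv f) x)"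
    and "w \<equiv> \<lambda>x. v (t * poly f x) * poly (pderiv (pderiv f)) x / (t * (poly (pderiv f) x)\<^sup>2)"
  shows "w integrable_on {c..e}"
    and "integral {c..e} (\<lambda>x. u (t * poly f x)) = G e - G c + integral {c..e} w"
proof -
  have "(G has_real_derivative u (t * poly f x) - w x) (at x)" if "x \<in> {c..e}" for x
    unfolding G_def w_def using nz that t
    by (auto intro!: derivative_eq_intros DERIV_chain2[OF v] simp: field_simps power2_eq_square)
  then have FTC: "((\<lambda>x. u (t * poly f x) - w x) has_integral (G e - G c)) {c..e}"
    using ce by (intro fundamental_theorem_of_calculus)
      (auto simp: has_real_derivative_iff_has_vector_derivative[symmetric]
        intro: has_field_derivative_at_within)
  have v_cont: "continuous_on UNIV v"
    using v by (metis DERIV_isCont continuous_at_imp_continuous_on)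
  show w_int: "w integrable_on {c..e}"
    unfolding w_def using nz t
    by (intro integrable_continuous_interval continuous_intros continuous_on_compose2[OF v_cont]) auto
  have "(\<lambda>x. u (t * poly f x)) integrable_on {c..e}"
    by (intro integrable_continuous_interval continuous_intros continuous_on_compose2[OF u_cont]) auto
  then show "integral {c..e} (\<lambda>x. u (t * poly f x)) = G e - G c + integral {c..e} w"
    using integral_unique[OF FTC] integral_diff[OF _ w_int] by simp
qed

lemma van_der_corput_first_derivative:
  fixes f :: "real poly" and u v :: "real \<Rightarrow> real"
  assumes v: "\<And>y. (v has_real_derivative u y) (at y)"
    and u_bound: "\<And>y. \<bar>u y\<bar> \<le> 1" and v_bound: "\<And>y. \<bar>v y\<bar> \<le> 1" and u_cont: "continuous_on UNIV u"
    and ce: "c \<le> e" and t: "t \<noteq> 0" and L: "L > 0"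
    and large: "\<forall>x\<in>{c..e}. L \<le> \<bar>poly (pderiv f) x\<bar>"
    and sign: "(\<forall>x\<in>{c..e}. 0 \<le> poly (pderiv (pderiv f)) x)
             \<or> (\<forall>x\<in>{c..e}. poly (pderiv (pderiv f)) x \<le> 0)"
  shows "\<bar>integral {c..e} (\<lambda>x. u (t * poly f x))\<bar> \<le> 4 / (\<bar>t\<bar> * L)"
proof -
  define G where "G x = v (t * poly f x) / (t * poly (pderiv f) x)" for x
  define w where "w x = v (t * poly f x) * poly (pderiv (pderiv f)) x / (t * (poly (pderiv f) x)\<^sup>2)" for x
  have "\<forall>x\<in>{c..e}. poly (pderiv f) x \<noteq> 0" using large L by force
  note parts = integral_comp_poly_by_parts[OF v u_cont ce t this, folded w_def[abs_def]]
  have eq: "integral {c..e} (\<lambda>x. u (t * poly f x)) = (G e - G c) + integral {c..e} w"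
    using parts(2) by (simp add: G_def)
  have "\<bar>G x\<bar> \<le> 1 / (\<bar>t\<bar> * L)" if "x \<in> {c..e}" for x
    unfolding G_def abs_divide abs_mult using v_bound[of "t * poly f x"] large that t L
    by (intro frac_le) (auto intro: mult_left_mono)
  from this[of c] this[of e] have G_bound: "\<bar>G e - G c\<bar> \<le> 2 / (\<bar>t\<bar> * L)"
    using ce by simp
  define r where "r x = \<bar>poly (pderiv (pderiv f)) x\<bar> / (poly (pderiv f) x)\<^sup>2" for x
  have r: "r integrable_on {c..e}" "integral {c..e} r \<le> 2 / L"
    using integral_abs_pderiv_div_square_le[OF ce L, of "pderiv f"] large sign
    unfolding r_def[abs_def] by auto
  have "norm (integral {c..e} w) \<le> integral {c..e} (\<lambda>x. r x / \<bar>t\<bar>)"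
  proof (rule integral_norm_bound_integral[OF parts(1)])
    show "(\<lambda>x. r x / \<bar>t\<bar>) integrable_on {c..e}" using r(1) t by simp
    fix x
    have "\<bar>v (t * poly f x)\<bar> * r x / \<bar>t\<bar> \<le> 1 * r x / \<bar>t\<bar>"
      using v_bound by (intro divide_right_mono mult_right_mono) (auto simp: r_def)
    then show "norm (w x) \<le> r x / \<bar>t\<bar>"
      by (simp add: w_def r_def abs_mult abs_divide ac_simps)
  qed
  also have "\<dots> \<le> 2 / (\<bar>t\<bar> * L)"
    using r(2) t by (simp add: divide_right_mono field_simps)
  finally show ?thesis using eq G_bound by (simp add: field_simps)
qed

section \<open>Oscillatory integrals over intervals\<close>

lemma additive_interval_fun_bound:
  fixes F :: "real \<Rightarrow> real \<Rightarrow> real" and B :: real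
  assumes finite: "finite Z" and B: "B \<ge> 0"
    and additive: "\<And>x y z. a \<le> x \<Longrightarrow> x \<le> y \<Longrightarrow> y \<le> z \<Longrightarrow> z \<le> b \<Longrightarrow> F x z = F x y + F y z"
    and cell: "\<And>x y. a \<le> x \<Longrightarrow> x < y \<Longrightarrow> y \<le> b \<Longrightarrow> {x<..<y} \<inter> Z = {} \<Longrightarrow> \<bar>F x y\<bar> \<le> B"
  shows "a \<le> x \<Longrightarrow> x \<le> y \<Longrightarrow> y \<le> b \<Longrightarrow> \<bar>F x y\<bar> \<le> (card (Z \<inter> {x<..<y}) + 1) * B"
proof (induction "card (Z \<inter> {x<..<y})" arbitrary: x y rule: less_induct)
  case (less x y)
  show ?case
  proof (cases "Z \<inter> {x<..<y} = {}")
    case True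
    show ?thesis
    proof (cases "x = y")
      case True
      then show ?thesis using additive[of x x x] less.prems B by simp
    next
      case False
      then show ?thesis using cell[of x y] less.prems True by (auto simp: inf_commute)
    qed
  next
    case False
    then obtain z where z: "z \<in> Z" "x < z" "z < y" by auto
    have "(Z \<inter> {x<..<z}) \<union> (Z \<inter> {z<..<y}) \<subseteq> Z \<inter> {x<..<y} - {z}" using z by auto
    then have "card ((Z \<inter> {x<..<z}) \<union> (Z \<inter> {z<..<y})) \<le> card (Z \<inter> {x<..<y}) - 1"
      using finite z card_mono[of "Z \<inter> {x<..<y} - {z}"] by simp
    moreover have "card (Z \<inter> {x<..<y}) > 0" using finite z by (auto simp: card_gt_0_iff)
    ultimately have split: "card (Z \<inter> {x<..<z}) + card (Z \<inter> {z<..<y}) < card (Z \<inter> {x<..<y})"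
      using finite card_Un_disjoint[of "Z \<inter> {x<..<z}" "Z \<inter> {z<..<y}"] by force
    have "\<bar>F x y\<bar> \<le> \<bar>F x z\<bar> + \<bar>F z y\<bar>" using additive[of x z y] less.prems z by simp
    also have "\<dots> \<le> (card (Z \<inter> {x<..<z}) + 1) * B + (card (Z \<inter> {z<..<y}) + 1) * B"
      using less.hyps[of x z] less.hyps[of z y] split less.prems z by (intro add_mono) auto
    also have "\<dots> = (card (Z \<inter> {x<..<z}) + card (Z \<inter> {z<..<y}) + 2) * B"
      by (simp add: algebra_simps)
    also have "\<dots> \<le> (card (Z \<inter> {x<..<y}) + 1) * B"
      using split B by (intro mult_right_mono) linarith+
    finally show ?thesis .
  qed
qed

definition roots_of :: "real poly list \<Rightarrow> real set" where
  "roots_of P = (\<Union>p\<in>{p\<in>set P. p \<noteq> 0}. {x. poly p x = 0})"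

lemma finite_roots_of: "finite (roots_of P)"
  unfolding roots_of_def by (auto intro: poly_roots_finite)

lemma card_roots_of_le: "card (roots_of P) \<le> (\<Sum>p\<leftarrow>P. degree p)"
proof (induction P)
  case Nil
  then show ?case by (simp add: roots_of_def)
next
  case (Cons p P)
  have split: "roots_of (p # P) = (if p = 0 then {} else {x. poly p x = 0}) \<union> roots_of P"
    by (auto simp: roots_of_def)
  have "card (roots_of (p # P)) \<le> card (if p = 0 then {} else {x. poly p x = 0}) + card (roots_of P)"
    unfolding split by (rule card_Un_le)
  also have "card (if p = 0 then {} else {x. poly p x = 0}) \<le> degree p"
    by (auto intro: card_poly_roots_bound)
  finally show ?case using Cons by simp
qed

lemma roots_ofI: "p \<in> set P \<Longrightarrow> p \<noteq> 0 \<Longrightarrow> poly p x = 0 \<Longrightarrow> x \<in> roots_of P"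
  by (auto simp: roots_of_def)

lemma continuous_sign_dichotomy:
  fixes h :: "real \<Rightarrow> real"
  assumes "connected S" "continuous_on S h" "\<forall>z\<in>S. h z \<noteq> 0"
  shows "(\<forall>z\<in>S. 0 < h z) \<or> (\<forall>z\<in>S. h z < 0)"
proof (rule ccontr)
  assume "\<not> ?thesis"
  then obtain a b where ab: "a \<in> S" "b \<in> S" "\<not> 0 < h a" "\<not> h b < 0" by auto
  with assms(3) have "h a < 0" "0 < h b" by force+
  then have "0 \<in> h ` S"
    using ab connectedD_interval[OF connected_continuous_image[OF assms(2,1)], of "h a" "h b" 0]
    by force
  then show False using assms(3) by auto
qed

lemma poly_sign_dichotomy_root_free:
  assumes "q \<in> set P" "{x<..<y} \<inter> roots_of P = {}"
  shows "(\<forall>z\<in>{x<..<y}. 0 \<le> poly q z) \<or> (\<forall>z\<in>{x<..<y}. poly q z \<le> 0)"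
proof (cases "q = 0")
  case False
  then have "\<forall>z\<in>{x<..<y}. poly q z \<noteq> 0" using assms roots_ofI by blast
  then have "(\<forall>z\<in>{x<..<y}. 0 < poly q z) \<or> (\<forall>z\<in>{x<..<y}. poly q z < 0)"
    by (intro continuous_sign_dichotomy) (auto intro!: continuous_intros)
  then show ?thesis by (meson less_imp_le)
qed simp

lemma abs_poly_dichotomy_root_free:
  assumes "q - [:c:] \<in> set P" "q + [:c:] \<in> set P" "{x<..<y} \<inter> roots_of P = {}"
  shows "(\<forall>z\<in>{x<..<y}. c \<le> \<bar>poly q z\<bar>) \<or> (\<forall>z\<in>{x<..<y}. \<bar>poly q z\<bar> < c)"
proof (cases "q = [:c:] \<or> q = [:-c:]")
  case False
  then have nz: "q - [:c:] \<noteq> 0" "q + [:c:] \<noteq> 0"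
    by (auto simp: add_eq_0_iff2)
  have "\<bar>poly q z\<bar> - c \<noteq> 0" if "z \<in> {x<..<y}" for z
  proof
    assume "\<bar>poly q z\<bar> - c = 0"
    then have "poly (q - [:c:]) z = 0 \<or> poly (q + [:c:]) z = 0" by (auto simp: abs_if split: if_splits)
    then have "z \<in> roots_of P" using roots_ofI[OF assms(1) nz(1)] roots_ofI[OF assms(2) nz(2)] by blast
    then show False using that assms(3) by blast
  qed
  then have "(\<forall>z\<in>{x<..<y}. 0 < \<bar>poly q z\<bar> - c) \<or> (\<forall>z\<in>{x<..<y}. \<bar>poly q z\<bar> - c < 0)"
    by (intro continuous_sign_dichotomy) (auto intro!: continuous_intros)
  then show ?thesis by auto
qed auto

definition cut_polys :: "real poly \<Rightarrow> nat \<Rightarrow> real \<Rightarrow> real poly list" where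
  "cut_polys f k L = [(pderiv ^^ k) f - [:1:], (pderiv ^^ k) f + [:1:],
     pderiv f - [:L:], pderiv f + [:L:], pderiv (pderiv f)]"

lemma degree_higher_pderiv: "degree ((pderiv ^^ k) f) \<le> degree f" for f :: "real poly"
  by (induction k) (auto simp: degree_pderiv)

lemma card_roots_cut_polys: "card (roots_of (cut_polys f k L)) \<le> 5 * degree f"
proof -
  have "degree ((pderiv ^^ k) f) \<le> degree f" "degree (pderiv f) \<le> degree f"
    "degree (pderiv (pderiv f)) \<le> degree f"
    using degree_higher_pderiv[of k f] degree_higher_pderiv[of 1 f] degree_higher_pderiv[of 2 f]
    by (simp_all add: numeral_2_eq_2)
  then have "degree ((pderiv ^^ k) f - [:1:]) \<le> degree f" "degree ((pderiv ^^ k) f + [:1:]) \<le> degree f"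
    "degree (pderiv f - [:L:]) \<le> degree f" "degree (pderiv f + [:L:]) \<le> degree f"
    "degree (pderiv (pderiv f)) \<le> degree f"
    by (auto intro!: degree_diff_le degree_add_le)
  then have "(\<Sum>p\<leftarrow>cut_polys f k L. degree p) \<le> 5 * degree f"
    by (simp add: cut_polys_def)
  then show ?thesis using card_roots_of_le[of "cut_polys f k L"] by linarith
qed

lemma continuous_le_on_Icc_of_Ioo:
  fixes h :: "real \<Rightarrow> real"
  assumes "continuous_on UNIV h" "x < y" "\<forall>z\<in>{x<..<y}. h z \<le> c"
  shows "\<forall>z\<in>{x..y}. h z \<le> c"
proof -
  have "continuous_on {x..y} h" using assms(1) continuous_on_subset by blast
  then show ?thesis using continuous_le_on_closure[of "{x<..<y}" h _ c] assms(2,3) by auto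
qed

lemma continuous_ge_on_Icc_of_Ioo:
  fixes h :: "real \<Rightarrow> real"
  assumes "continuous_on UNIV h" "x < y" "\<forall>z\<in>{x<..<y}. c \<le> h z"
  shows "\<forall>z\<in>{x..y}. c \<le> h z"
proof -
  have "continuous_on {x..y} h" using assms(1) continuous_on_subset by blast
  then show ?thesis using continuous_ge_on_closure[of "{x<..<y}" h _ c] assms(2,3) by auto
qed

lemma cell_length_le_of_small_derivative:
  fixes f :: "real poly"
  assumes t: "t \<noteq> 0" and k: "1 \<le> k" and xy: "x < y"
    and large: "\<forall>z\<in>{x..y}. 1 \<le> \<bar>poly ((pderiv ^^ k) f) z\<bar>"
    and small: "\<forall>z\<in>{x<..<y}. \<bar>poly (pderiv f) z\<bar> < L"
    and L: "L = \<bar>t\<bar> powr (- (real k - 1) / real k)"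
  shows "y - x \<le> 2 * real k * \<bar>t\<bar> powr (- 1 / real k)"
proof -
  have "k \<noteq> 1"
  proof
    assume "k = 1"
    then have "\<bar>poly (pderiv f) ((x + y) / 2)\<bar> < 1" "1 \<le> \<bar>poly (pderiv f) ((x + y) / 2)\<bar>"
      using small large xy t by (auto simp: L)
    then show False by simp
  qed
  then obtain n where n: "k = Suc n" "n \<ge> 1" using k by (cases k) auto
  have "\<forall>z\<in>{x..y}. \<bar>poly (pderiv f) z\<bar> \<le> L"
    using small xy by (intro continuous_le_on_Icc_of_Ioo) (auto intro!: continuous_intros)
  then have "y - x \<le> 2 * real n * L powr (1 / real n)"
    using poly_sublevel_interval_length[OF n(2), of x y "pderiv f" L] large xy n(1)
    by (simp add: funpow_Suc_right del: funpow.simps)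
  also have "L powr (1 / real n) = \<bar>t\<bar> powr (- 1 / real k)"
    using n by (simp add: L powr_powr field_simps)
  also have "2 * real n * \<bar>t\<bar> powr (- 1 / real k) \<le> 2 * real k * \<bar>t\<bar> powr (- 1 / real k)"
    using n by (intro mult_right_mono) auto
  finally show ?thesis .
qed

lemma oscillatory_integral_bound_on_cell:
  fixes f :: "real poly" and u v :: "real \<Rightarrow> real"
  assumes v: "\<And>y. (v has_real_derivative u y) (at y)"
    and u_bound: "\<And>y. \<bar>u y\<bar> \<le> 1" and v_bound: "\<And>y. \<bar>v y\<bar> \<le> 1" and u_cont: "continuous_on UNIV u"
    and t: "t \<noteq> 0" and k: "1 \<le> k" and xy: "x < y"
    and large: "\<forall>z\<in>{x..y}. 1 \<le> \<bar>poly ((pderiv ^^ k) f) z\<bar>"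
    and root_free: "{x<..<y} \<inter> roots_of (cut_polys f k L) = {}"
    and L: "L = \<bar>t\<bar> powr (- (real k - 1) / real k)"
  shows "\<bar>integral {x..y} (\<lambda>z. u (t * poly f z))\<bar> \<le> 4 * real k * \<bar>t\<bar> powr (- 1 / real k)"
proof -
  define T where "T = \<bar>t\<bar> powr (- 1 / real k)"
  have L0: "L > 0" and T0: "T > 0" using t by (simp_all add: L T_def)
  from abs_poly_dichotomy_root_free[of "pderiv f" L "cut_polys f k L" x y] root_free
  consider (small) "\<forall>z\<in>{x<..<y}. \<bar>poly (pderiv f) z\<bar> < L"
    | (big) "\<forall>z\<in>{x<..<y}. L \<le> \<bar>poly (pderiv f) z\<bar>"
    by (auto simp: cut_polys_def)
  then show ?thesis
  proof cases
    case small
    have "continuous_on {x..y} (\<lambda>z. u (t * poly f z))"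
      by (intro continuous_on_compose2[OF u_cont] continuous_intros) auto
    then have "\<bar>integral {x..y} (\<lambda>z. u (t * poly f z))\<bar> \<le> 1 * (y - x)"
      using integral_bound[of x y "\<lambda>z. u (t * poly f z)" 1] xy u_bound by simp
    also have "\<dots> \<le> 2 * real k * T"
      using cell_length_le_of_small_derivative[OF t k xy large small L] by (simp add: T_def)
    finally show ?thesis using T0 by (simp add: T_def)
  next
    case big
    then have big': "\<forall>z\<in>{x..y}. L \<le> \<bar>poly (pderiv f) z\<bar>"
      using xy by (intro continuous_ge_on_Icc_of_Ioo) (auto intro!: continuous_intros)
    have cont: "continuous_on UNIV (\<lambda>z. poly (pderiv (pderiv f)) z)" by (intro continuous_intros)
    from poly_sign_dichotomy_root_free[of "pderiv (pderiv f)" "cut_polys f k L" x y] root_free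
    have "(\<forall>z\<in>{x..y}. 0 \<le> poly (pderiv (pderiv f)) z) \<or> (\<forall>z\<in>{x..y}. poly (pderiv (pderiv f)) z \<le> 0)"
      using continuous_ge_on_Icc_of_Ioo[OF cont xy, of 0] continuous_le_on_Icc_of_Ioo[OF cont xy, of 0]
      by (auto simp: cut_polys_def)
    then have "\<bar>integral {x..y} (\<lambda>z. u (t * poly f z))\<bar> \<le> 4 / (\<bar>t\<bar> * L)"
      using xy by (intro van_der_corput_first_derivative[OF v u_bound v_bound u_cont _ t L0 big']) auto
    also have "\<bar>t\<bar> * L = \<bar>t\<bar> powr (1 + - (real k - 1) / real k)" using t by (simp add: L powr_add)
    also have "1 + - (real k - 1) / real k = 1 / real k" using k by (simp add: field_simps)
    also have "4 / \<bar>t\<bar> powr (1 / real k) \<le> 4 * real k * T"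
      using k t by (simp add: T_def powr_minus_divide divide_right_mono)
    finally show ?thesis by (simp add: T_def)
  qed
qed

lemma oscillatory_set_integral_bound_on_cell:
  fixes f :: "real poly" and u v :: "real \<Rightarrow> real"
  assumes v: "\<And>y. (v has_real_derivative u y) (at y)"
    and u_bound: "\<And>y. \<bar>u y\<bar> \<le> 1" and v_bound: "\<And>y. \<bar>v y\<bar> \<le> 1" and u_cont: "continuous_on UNIV u"
    and t: "t \<noteq> 0" and k: "1 \<le> k" and xy: "x < y"
    and root_free: "{x<..<y} \<inter> roots_of (cut_polys f k L) = {}"
    and L: "L = \<bar>t\<bar> powr (- (real k - 1) / real k)"
  shows "\<bar>LINT z:({z. 1 \<le> \<bar>poly ((pderiv ^^ k) f) z\<bar>} \<inter> {x..y})|lborel. u (t * poly f z)\<bar>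
           \<le> 4 * real k * \<bar>t\<bar> powr (- 1 / real k)"
proof -
  define A where "A = {z. 1 \<le> \<bar>poly ((pderiv ^^ k) f) z\<bar>}"
  have cont: "continuous_on UNIV (\<lambda>z. \<bar>poly ((pderiv ^^ k) f) z\<bar>)" by (intro continuous_intros)
  from abs_poly_dichotomy_root_free[of "(pderiv ^^ k) f" 1 "cut_polys f k L" x y] root_free
  consider (outside) "\<forall>z\<in>{x<..<y}. \<bar>poly ((pderiv ^^ k) f) z\<bar> < 1"
    | (inside) "\<forall>z\<in>{x<..<y}. 1 \<le> \<bar>poly ((pderiv ^^ k) f) z\<bar>"
    by (auto simp: cut_polys_def)
  then show ?thesis
  proof cases
    case outside
    have "AE z in lborel. indicator (A \<inter> {x..y}) z *\<^sub>R u (t * poly f z) = 0"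
      using AE_lborel_singleton[of x] AE_lborel_singleton[of y]
      by eventually_elim (use outside in \<open>auto simp: A_def indicator_def not_le\<close>)
    then have "(LINT z:(A \<inter> {x..y})|lborel. u (t * poly f z)) = 0"
      unfolding set_lebesgue_integral_def by (rule integral_eq_zero_AE)
    then show ?thesis by (simp add: A_def)
  next
    case inside
    then have "A \<inter> {x..y} = {x..y}"
      using continuous_ge_on_Icc_of_Ioo[OF cont xy] by (auto simp: A_def)
    moreover have "set_integrable lborel {x..y} (\<lambda>z. u (t * poly f z))"
      by (intro borel_integrable_atLeastAtMost' continuous_on_compose2[OF u_cont] continuous_intros) auto
    ultimately have "(LINT z:(A \<inter> {x..y})|lborel. u (t * poly f z)) = integral {x..y} (\<lambda>z. u (t * poly f z))"
      by (simp add: set_borel_integral_eq_integral)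
    moreover have "\<forall>z\<in>{x..y}. 1 \<le> \<bar>poly ((pderiv ^^ k) f) z\<bar>"
      using continuous_ge_on_Icc_of_Ioo[OF cont xy inside] .
    ultimately show ?thesis
      using oscillatory_integral_bound_on_cell[OF v u_bound v_bound u_cont t k xy _ root_free L]
      by (simp add: A_def)
  qed
qed

lemma oscillatory_set_integral_bound_on_interval:
  fixes f :: "real poly" and u v :: "real \<Rightarrow> real"
  assumes v: "\<And>y. (v has_real_derivative u y) (at y)"
    and u_bound: "\<And>y. \<bar>u y\<bar> \<le> 1" and v_bound: "\<And>y. \<bar>v y\<bar> \<le> 1" and u_cont: "continuous_on UNIV u"
    and t: "t \<noteq> 0" and k: "1 \<le> k" and kd: "k \<le> degree f" and ab: "a \<le> b"
  shows "\<bar>LINT x:({x. 1 \<le> \<bar>poly ((pderiv ^^ k) f) x\<bar>} \<inter> {a..b})|lborel. u (t * poly f x)\<bar>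
           \<le> 24 * real (degree f) * real k * \<bar>t\<bar> powr (- 1 / real k)"
proof -
  define L where "L = \<bar>t\<bar> powr (- (real k - 1) / real k)"
  define B where "B = 4 * real k * \<bar>t\<bar> powr (- 1 / real k)"
  define A where "A = {x. 1 \<le> \<bar>poly ((pderiv ^^ k) f) x\<bar>}"
  define F where "F x y = (LINT z:(A \<inter> {x..y})|lborel. u (t * poly f z))" for x y
  define Z where "Z = roots_of (cut_polys f k L)"
  have [measurable]: "A \<in> sets borel"
    unfolding A_def by (intro borel_closed closed_Collect_le continuous_intros)
  have integrable: "set_integrable lborel (A \<inter> {x..y}) (\<lambda>z. u (t * poly f z))" for x y
    by (rule set_integrable_subset[OF borel_integrable_atLeastAtMost'])
      (auto intro!: continuous_on_compose2[OF u_cont] continuous_intros)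
  have additive: "F x z = F x y + F y z" if "x \<le> y" "y \<le> z" for x y z
  proof -
    have "A \<inter> {x..z} = (A \<inter> {x..y}) \<union> (A \<inter> {y..z})" using that by auto
    moreover have "AE w in lborel. \<not> (w \<in> A \<inter> {x..y} \<and> w \<in> A \<inter> {y..z})"
      using AE_lborel_singleton[of y] by eventually_elim auto
    ultimately show ?thesis
      unfolding F_def by (simp only:) (rule set_integral_Un_AE[OF _ _ _ integrable integrable]; simp)
  qed
  have cell: "\<bar>F x y\<bar> \<le> B" if "x < y" "{x<..<y} \<inter> Z = {}" for x y
    using oscillatory_set_integral_bound_on_cell[OF v u_bound v_bound u_cont t k that(1) _ L_def] that(2)
    by (simp add: Z_def B_def F_def A_def inf_commute)
  have "\<bar>F a b\<bar> \<le> (card (Z \<inter> {a<..<b}) + 1) * B"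
  proof (rule additive_interval_fun_bound[of Z B a b F])
    show "finite Z" by (simp add: Z_def finite_roots_of)
    show "B \<ge> 0" by (simp add: B_def)
    show "F x z = F x y + F y z" if "a \<le> x" "x \<le> y" "y \<le> z" "z \<le> b" for x y z
      using that by (intro additive)
    show "\<bar>F x y\<bar> \<le> B" if "a \<le> x" "x < y" "y \<le> b" "{x<..<y} \<inter> Z = {}" for x y
      using that by (intro cell)
  qed (use ab in auto)
  also have "\<dots> \<le> (5 * degree f + 1) * B"
    using card_mono[OF finite_roots_of, of "Z \<inter> {a<..<b}" "cut_polys f k L"]
      card_roots_cut_polys[of f k L]
    by (intro mult_right_mono) (auto simp: Z_def B_def)
  also have "\<dots> \<le> 6 * degree f * B" using k kd by (intro mult_right_mono) (auto simp: B_def)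
  finally show ?thesis by (simp add: F_def A_def B_def)
qed

section \<open>Isotropic log-concave densities are bounded\<close>

lemma convex_not_interior_eq_Inf_or_Sup:
  fixes S :: "real set"
  assumes "convex S" "x \<in> S" "x \<notin> interior S"
  shows "x = Inf S \<or> x = Sup S"
proof -
  have "(\<forall>y\<in>S. x \<le> y) \<or> (\<forall>y\<in>S. y \<le> x)"
  proof (rule ccontr)
    assume "\<not> ?thesis"
    then obtain y z where yz: "y \<in> S" "z \<in> S" "y < x" "x < z" by (auto simp: not_le)
    have iv: "is_interval S" using assms(1) by (simp add: is_interval_convex_1)
    have "{y<..<z} \<subseteq> S" using mem_is_interval_1_I[OF iv yz(1,2)] by auto
    then have "{y<..<z} \<subseteq> interior S" by (rule interior_maximal) simp
    then show False using yz assms(3) by auto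
  qed
  then show ?thesis
    using assms(2) cInf_eq_minimum[of x S] cSup_eq_maximum[of x S] by auto
qed

lemma convex_on_strict_sublevel:
  fixes \<phi> :: "real \<Rightarrow> real"
  assumes "convex S" "convex_on S \<phi>"
  shows "convex {x\<in>S. \<phi> x < c}"
proof (rule convexI)
  fix x y a b :: real
  assume x: "x \<in> {x\<in>S. \<phi> x < c}" and y: "y \<in> {x\<in>S. \<phi> x < c}"
    and ab: "0 \<le> a" "0 \<le> b" "a + b = 1"
  have a: "a = 1 - b" using ab(3) by simp
  have "\<phi> (a *\<^sub>R x + b *\<^sub>R y) \<le> a * \<phi> x + b * \<phi> y"
    using convex_onD[OF assms(2), of b x y] x y ab unfolding a by simp
  also have "\<dots> < c" using x y ab by (intro convex_bound_lt) auto
  finally show "a *\<^sub>R x + b *\<^sub>R y \<in> {x\<in>S. \<phi> x < c}"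
    using convexD[OF assms(1), of x y a b] x y ab by simp
qed

lemma convex_finite_measure_between:
  fixes J :: "real set"
  assumes "convex J" "J \<in> sets borel" "emeasure lborel J < \<infinity>" "J \<noteq> {}"
  obtains a b where "a \<le> b" "{a<..<b} \<subseteq> J" "J \<subseteq> {a..b}"
proof -
  have iv: "is_interval J" using assms(1) by (simp add: is_interval_convex_1)
  have interval: "{x..z} \<subseteq> J" if "x \<in> J" "z \<in> J" for x z
    using mem_is_interval_1_I[OF iv that] by auto
  obtain B where B: "emeasure lborel J = ennreal B" "B \<ge> 0"
    using assms(3) by (cases "emeasure lborel J" rule: ennreal_cases) auto
  have width: "z - x \<le> B" if "x \<in> J" "z \<in> J" "x \<le> z" for x z
  proof -
    have "emeasure lborel {x..z} \<le> emeasure lborel J"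
      using interval[OF that(1,2)] assms(2) by (intro emeasure_mono) auto
    then have "ennreal (z - x) \<le> ennreal B" using that(3) B(1) by simp
    then show ?thesis using B(2) by (simp add: ennreal_le_iff)
  qed
  obtain x0 where x0: "x0 \<in> J" using assms(4) by auto
  have "z \<le> x0 + B" if "z \<in> J" for z using width[OF x0 that] B(2) by (cases "x0 \<le> z") auto
  moreover have "x0 - B \<le> z" if "z \<in> J" for z using width[OF that x0] B(2) by (cases "z \<le> x0") auto
  ultimately have bounded: "bdd_above J" "bdd_below J" by (meson bdd_aboveI bdd_belowI)+
  show ?thesis
  proof (rule that[of "Inf J" "Sup J"])
    show "J \<subseteq> {Inf J..Sup J}" using bounded by (auto intro: cInf_lower cSup_upper)
    then show "Inf J \<le> Sup J" using x0 by auto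
    show "{Inf J<..<Sup J} \<subseteq> J"
    proof
      fix z assume z: "z \<in> {Inf J<..<Sup J}"
      obtain x where "x \<in> J" "x < z" using z cInf_less_iff[OF assms(4) bounded(2)] by auto
      moreover obtain y where "y \<in> J" "z < y" using z less_cSup_iff[OF assms(4) bounded(1)] by auto
      ultimately show "z \<in> J" using interval by fastforce
    qed
  qed
qed

lemma exp_neg_le_inverse_power4:
  fixes r :: real assumes r: "r > 0" shows "exp (- r) \<le> 256 / r ^ 4"
proof -
  have "(r / 4) ^ 4 \<le> (1 + r / real 4) ^ 4" using r by (intro power_mono) auto
  also have "\<dots> \<le> exp r" using r by (intro exp_ge_one_plus_x_over_n_power_n) auto
  finally have "r ^ 4 / 256 \<le> exp r" by (simp add: power_divide)
  then show ?thesis using r by (simp add: exp_minus field_simps)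
qed

locale log_concave_density =
  fixes S :: "real set" and \<phi> :: "real \<Rightarrow> real"
  assumes convex_domain: "convex S" and convex_potential: "convex_on S \<phi>"
begin

definition dens :: "real \<Rightarrow> real" where
  "dens x = indicator S x * exp (- \<phi> x)"

lemma dens_nonneg: "0 \<le> dens x"
  by (simp add: dens_def)

lemma borel_measurable_dens [measurable]: "dens \<in> borel_measurable borel"
proof -
  \<comment> \<open>\<open>\<phi>\<close> is continuous on the interior of \<open>S\<close>, and at most the two endpoints of \<open>S\<close> lie outside it.\<close>
  define T where "T = interior S"
  define E where "E = S - T"
  have "convex_on T \<phi>"
    using convex_on_subset[OF convex_potential interior_subset] convex_interior[OF convex_domain]
    by (simp add: T_def)
  then have "continuous_on T \<phi>" by (intro convex_on_continuous) (simp_all add: T_def)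
  then have m1: "(\<lambda>x. indicator T x *\<^sub>R exp (- \<phi> x)) \<in> borel_measurable borel"
    by (intro borel_measurable_continuous_on_indicator continuous_intros) (auto simp: T_def)
  have "E \<subseteq> {Inf S, Sup S}"
    using convex_not_interior_eq_Inf_or_Sup[OF convex_domain] by (auto simp: E_def T_def)
  then have finE: "finite E" by (rule finite_subset) auto
  have "dens x = indicator T x *\<^sub>R exp (- \<phi> x) + (\<Sum>p\<in>E. exp (- \<phi> p) * indicator {p} x)" for x
  proof -
    have "(\<Sum>p\<in>E. exp (- \<phi> p) * indicator {p} x) = (if x \<in> E then exp (- \<phi> x) else 0)"
      using finE by (simp add: indicator_def sum.delta' if_distrib[of "\<lambda>c. _ * c"] cong: if_cong)
    then show ?thesis using interior_subset[of S] by (auto simp: dens_def E_def T_def indicator_def)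
  qed
  then have "dens = (\<lambda>x. indicator T x *\<^sub>R exp (- \<phi> x) + (\<Sum>p\<in>E. exp (- \<phi> p) * indicator {p} x))"
    by auto
  also have "\<dots> \<in> borel_measurable borel" using m1 by measurable
  finally show ?thesis .
qed

lemma convex_superlevel_dens:
  assumes "s > 0" shows "convex {x. s < dens x}"
proof -
  have "s < exp (- \<phi> x) \<longleftrightarrow> \<phi> x < - ln s" for x
    using assms ln_less_cancel_iff[of s "exp (- \<phi> x)"] by auto
  then have "{x. s < dens x} = {x\<in>S. \<phi> x < - ln s}"
    using assms by (auto simp: dens_def indicator_def)
  then show ?thesis using convex_on_strict_sublevel[OF convex_domain convex_potential] by simp
qed

end

lemma nn_integral_inverse_square_atLeast:
  fixes c K x0 :: real
  assumes c: "c > 0" and K: "K \<ge> 0"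
  shows "(\<integral>\<^sup>+x. ennreal (K / (x - x0)\<^sup>2) * indicator {x0 + c..} x \<partial>lborel) = ennreal (K / c)"
proof -
  have "(\<integral>\<^sup>+x. ennreal (K / (x - x0)\<^sup>2) * indicator {x0 + c..} x \<partial>lborel)
      = ennreal (0 - (- K / (x0 + c - x0)))"
  proof (rule nn_integral_FTC_atLeast)
    fix x assume "x0 + c \<le> x"
    then have "x - x0 \<noteq> 0" using c by simp
    then show "((\<lambda>x. - K / (x - x0)) has_real_derivative K / (x - x0)\<^sup>2) (at x)"
      by (auto intro!: derivative_eq_intros simp: power2_eq_square field_simps)
    show "0 \<le> K / (x - x0)\<^sup>2" using K by simp
  next
    show "((\<lambda>x. - K / (x - x0)) \<longlongrightarrow> 0) at_top" by real_asymp
  qed measurable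
  then show ?thesis by simp
qed

lemma nn_integral_inverse_square_tail:
  fixes c K x0 :: real
  assumes c: "c > 0" and K: "K \<ge> 0"
  shows "(\<integral>\<^sup>+x. ennreal (K / (x - x0)\<^sup>2) * indicator {x. c \<le> \<bar>x - x0\<bar>} x \<partial>lborel) = ennreal (2 * K / c)"
proof -
  define g where "g x = ennreal (K / (x - x0)\<^sup>2)" for x
  have "(\<integral>\<^sup>+x. g x * indicator {..x0 - c} x \<partial>lborel)
      = (\<integral>\<^sup>+x. g (2 * x0 + (-1) * x) * indicator {..x0 - c} (2 * x0 + (-1) * x) \<partial>lborel)"
    using nn_integral_real_affine[where f = "\<lambda>x. g x * indicator {..x0 - c} x" and c = "-1" and t = "2 * x0"]
    by (simp add: g_def)
  also have "\<dots> = (\<integral>\<^sup>+x. g x * indicator {x0 + c..} x \<partial>lborel)"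
  proof (intro nn_integral_cong)
    fix x
    have "(2 * x0 + (-1) * x - x0)\<^sup>2 = (x - x0)\<^sup>2" by (simp add: power2_eq_square algebra_simps)
    moreover have "2 * x0 + (-1) * x \<le> x0 - c \<longleftrightarrow> x0 + c \<le> x" by auto
    ultimately show "g (2 * x0 + (-1) * x) * indicator {..x0 - c} (2 * x0 + (-1) * x)
        = g x * indicator {x0 + c..} x"
      by (simp add: g_def indicator_def)
  qed
  finally have left: "(\<integral>\<^sup>+x. g x * indicator {..x0 - c} x \<partial>lborel) = ennreal (K / c)"
    using nn_integral_inverse_square_atLeast[OF c K] by (simp add: g_def)
  have "indicator {x. c \<le> \<bar>x - x0\<bar>} x = (indicator {x0 + c..} x + indicator {..x0 - c} x :: ennreal)" for x
    using c by (auto simp: indicator_def)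
  then have "(\<integral>\<^sup>+x. g x * indicator {x. c \<le> \<bar>x - x0\<bar>} x \<partial>lborel)
      = (\<integral>\<^sup>+x. g x * indicator {x0 + c..} x \<partial>lborel) + (\<integral>\<^sup>+x. g x * indicator {..x0 - c} x \<partial>lborel)"
    by (simp add: distrib_left nn_integral_add g_def)
  also have "\<dots> = ennreal (2 * K / c)"
    using left nn_integral_inverse_square_atLeast[OF c K] c K by (simp add: g_def flip: ennreal_plus)
  finally show ?thesis by (simp add: g_def)
qed

locale normalized_log_concave_density = log_concave_density +
  assumes total: "(\<integral>\<^sup>+x. ennreal (dens x) \<partial>lborel) = 1"
begin

lemma integrable_dens: "integrable lborel dens"
  by (rule integrableI_nonneg) (use total dens_nonneg in auto)

lemma emeasure_superlevel_dens_le: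
  assumes s: "s > 0" shows "emeasure lborel {x. s < dens x} \<le> ennreal (1 / s)"
proof -
  have "ennreal s * emeasure lborel {x. s < dens x} = (\<integral>\<^sup>+x. ennreal s * indicator {x. s < dens x} x \<partial>lborel)"
    by (rule nn_integral_cmult_indicator[symmetric]) measurable
  also have "\<dots> \<le> (\<integral>\<^sup>+x. ennreal (dens x) \<partial>lborel)"
    by (intro nn_integral_mono) (auto simp: indicator_def intro: ennreal_leI)
  finally have "ennreal s * emeasure lborel {x. s < dens x} \<le> 1" using total by simp
  then have "ennreal (1 / s) * (ennreal s * emeasure lborel {x. s < dens x}) \<le> ennreal (1 / s)"
    using mult_left_mono[of _ 1 "ennreal (1 / s)"] by simp
  then show ?thesis using s by (simp add: mult.assoc[symmetric] ennreal_mult[symmetric])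
qed

lemma dist_le_of_potential_gap:
  assumes x0: "x0 \<in> S" and x: "x \<in> S" and r: "r \<ge> 1" and gap: "\<phi> x < \<phi> x0 + r"
  shows "\<bar>x - x0\<bar> \<le> r * exp 1 / dens x0"
proof -
  have d0: "dens x0 > 0" using x0 by (simp add: dens_def)
  define s where "s = dens x0 / exp 1"
  have s: "s > 0" using d0 by (simp add: s_def)
  define y where "y = (1 - 1 / r) * x0 + (1 / r) * x"
  have yS: "y \<in> S" unfolding y_def using convexD[OF convex_domain x0 x, of "1 - 1/r" "1/r"] r by simp
  have "\<phi> y \<le> (1 - 1 / r) * \<phi> x0 + (1 / r) * \<phi> x"
    unfolding y_def using convex_onD[OF convex_potential, of "1/r" x0 x] r x0 x by simp
  also have "\<dots> < \<phi> x0 + 1"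
    using mult_strict_left_mono[of "\<phi> x - \<phi> x0" r "1 / r"] gap r by (simp add: algebra_simps)
  finally have "s < dens y"
    using yS x0 by (simp add: s_def dens_def exp_diff[symmetric] exp_minus_inverse)
  moreover have "s < dens x0" using d0 by (simp add: s_def divide_less_eq)
  ultimately have "closed_segment x0 y \<subseteq> {z. s < dens z}"
    by (intro closed_segment_subset convex_superlevel_dens[OF s]) auto
  then have "emeasure lborel (closed_segment x0 y) \<le> emeasure lborel {z. s < dens z}"
    by (intro emeasure_mono) auto
  also have "\<dots> \<le> ennreal (1 / s)" by (rule emeasure_superlevel_dens_le[OF s])
  finally have "\<bar>y - x0\<bar> \<le> 1 / s"
    using s by (auto simp: closed_segment_eq_real_ivl ennreal_le_iff split: if_splits)
  moreover have "\<bar>y - x0\<bar> = \<bar>x - x0\<bar> / r"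
    using r by (simp add: y_def abs_divide flip: abs_of_pos) (simp add: field_simps)
  ultimately show ?thesis using r by (simp add: s_def field_simps)
qed

lemma dens_tail_le:
  assumes x0: "x0 \<in> S" and far: "2 * exp 1 / dens x0 \<le> \<bar>x - x0\<bar>"
  shows "dens x \<le> 4096 * exp 1 ^ 4 / (dens x0 ^ 3 * (x - x0) ^ 4)"
proof (cases "x \<in> S")
  case False
  then show ?thesis using dens_nonneg[of x0] by (simp add: dens_def)
next
  case True
  define m where "m = dens x0"
  have m: "m > 0" and m_exp: "m = exp (- \<phi> x0)" using x0 by (simp_all add: m_def dens_def)
  define r where "r = \<bar>x - x0\<bar> * m / (2 * exp 1)"
  have r: "r \<ge> 1" using far m by (simp add: r_def m_def field_simps)
  have dist: "\<bar>x - x0\<bar> > 0" using less_le_trans[OF _ far[folded m_def], of 0] m by simp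
  have "\<phi> x0 + r \<le> \<phi> x"
  proof (rule ccontr)
    assume "\<not> ?thesis"
    then have "\<bar>x - x0\<bar> \<le> r * exp 1 / m"
      using dist_le_of_potential_gap[OF x0 True r] by (simp add: m_def)
    also have "\<dots> = \<bar>x - x0\<bar> / 2" using m by (simp add: r_def)
    finally show False using dist by simp
  qed
  then have "dens x \<le> m * exp (- r)"
    using True by (simp add: dens_def m_exp flip: exp_add)
  also have "\<dots> \<le> m * (256 / r ^ 4)"
    using r m by (intro mult_left_mono exp_neg_le_inverse_power4) auto
  also have "\<dots> = 4096 * exp 1 ^ 4 / (m ^ 3 * (x - x0) ^ 4)"
  proof -
    define d where "d = \<bar>x - x0\<bar>"
    have r4: "r ^ 4 = d ^ 4 * (m * m ^ 3) / (16 * exp 1 ^ 4)"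
      by (simp add: r_def d_def power_divide power_mult_distrib eval_nat_numeral)
    have "(x - x0) ^ 4 = d ^ 4" "d > 0" using dist by (simp_all add: d_def)
    then show ?thesis unfolding r4 using m by (simp add: field_simps)
  qed
  finally show ?thesis by (simp add: m_def)
qed

lemma dens_mul_square_le:
  assumes x0: "x0 \<in> S" and c: "c = 2 * exp 1 / dens x0" and K: "K = 4096 * exp 1 ^ 4 / dens x0 ^ 3"
  shows "ennreal (dens x * (x - x0)\<^sup>2)
           \<le> ennreal (c\<^sup>2) * ennreal (dens x) + ennreal (K / (x - x0)\<^sup>2) * indicator {x. c \<le> \<bar>x - x0\<bar>} x"
proof (cases "c \<le> \<bar>x - x0\<bar>")
  case True
  have "c > 0" using x0 by (simp add: c dens_def)
  then have d: "(x - x0)\<^sup>2 > 0" using True by auto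
  have "dens x \<le> K / (x - x0) ^ 4"
    using dens_tail_le[OF x0, of x] True by (simp add: c K)
  then have "dens x * (x - x0)\<^sup>2 \<le> K / (x - x0) ^ 4 * (x - x0)\<^sup>2"
    by (rule mult_right_mono) simp
  also have "\<dots> = K / (x - x0)\<^sup>2" using d by (simp add: power2_eq_square power4_eq_xxxx)
  finally show ?thesis using True by (simp add: ennreal_leI add_increasing)
next
  case False
  then have "(x - x0)\<^sup>2 \<le> c\<^sup>2" using abs_le_square_iff[of "x - x0" c] by auto
  then have "dens x * (x - x0)\<^sup>2 \<le> c\<^sup>2 * dens x"
    using dens_nonneg[of x] by (simp add: mult.commute mult_left_mono)
  then show ?thesis using False dens_nonneg[of x] by (simp add: ennreal_mult'[symmetric] ennreal_leI)
qed

lemma dens_le_400: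
  assumes moment: "1 \<le> (\<integral>\<^sup>+x. ennreal (dens x * (x - x0)\<^sup>2) \<partial>lborel)"
  shows "dens x0 \<le> 400"
proof (cases "x0 \<in> S")
  case True
  define m where "m = dens x0"
  have m: "m > 0" using True by (simp add: m_def dens_def)
  define c where "c = 2 * exp 1 / m"
  define K where "K = 4096 * exp 1 ^ 4 / m ^ 3"
  have c: "c > 0" and K: "K > 0" using m by (simp_all add: c_def K_def)
  have "1 \<le> (\<integral>\<^sup>+x. ennreal (c\<^sup>2) * ennreal (dens x)
             + ennreal (K / (x - x0)\<^sup>2) * indicator {x. c \<le> \<bar>x - x0\<bar>} x \<partial>lborel)"
    using moment by (rule order_trans)
      (intro nn_integral_mono dens_mul_square_le[OF True]; simp add: c_def K_def m_def)
  also have "\<dots> = ennreal (c\<^sup>2 + 2 * K / c)"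
    using c K by (simp add: nn_integral_add nn_integral_cmult total nn_integral_inverse_square_tail
        flip: ennreal_plus)
  finally have "ennreal 1 \<le> ennreal (c\<^sup>2 + 2 * K / c)" by simp
  then have "1 \<le> c\<^sup>2 + 2 * K / c" using c K by (subst (asm) ennreal_le_iff) auto
  also have "c\<^sup>2 + 2 * K / c = (4 * exp 1 ^ 2 + 4096 * exp 1 ^ 3) / m\<^sup>2"
    using m by (simp add: c_def K_def field_simps power2_eq_square power3_eq_cube power4_eq_xxxx)
  finally have "m\<^sup>2 \<le> 4 * exp 1 ^ 2 + 4096 * exp 1 ^ 3" using m by (simp add: le_divide_eq)
  also have "\<dots> \<le> 4 * 3 ^ 2 + 4096 * 3 ^ 3"
    using power_mono[OF exp_le, of 2] power_mono[OF exp_le, of 3] by simp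
  also have "\<dots> \<le> 400\<^sup>2" by simp
  finally have "m \<le> 400" by (rule power2_le_imp_le) simp
  then show ?thesis by (simp add: m_def)
qed (simp add: dens_def)

end

section \<open>Layer cake and the weighted oscillatory integral\<close>

lemma lborel_layer_cake:
  fixes \<rho> h :: "real \<Rightarrow> real"
  assumes [measurable]: "\<rho> \<in> borel_measurable borel" "h \<in> borel_measurable borel"
    and nonneg: "\<And>x. 0 \<le> \<rho> x" and integrable: "integrable lborel \<rho>" and bound: "\<And>x. \<bar>h x\<bar> \<le> 1"
  shows "integrable lborel (\<lambda>s. LINT x|lborel. indicator {0<..<\<rho> x} s * h x)"
    and "(LINT x|lborel. \<rho> x * h x) = (LINT s|lborel. LINT x|lborel. indicator {0<..<\<rho> x} s * h x)"
proof -
  define \<Phi> where "\<Phi> x s = indicator {0<..<\<rho> x} s * h x" for x s :: real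
  have [measurable]: "case_prod \<Phi> \<in> borel_measurable (lborel \<Otimes>\<^sub>M lborel)"
  proof -
    have "case_prod \<Phi> = (\<lambda>p. if 0 < snd p \<and> snd p < \<rho> (fst p) then h (fst p) else 0)"
      by (auto simp: \<Phi>_def fun_eq_iff indicator_def)
    also have "\<dots> \<in> borel_measurable (lborel \<Otimes>\<^sub>M lborel)" by measurable
    finally show ?thesis .
  qed
  have inner: "(LINT s|lborel. \<Phi> x s) = \<rho> x * h x" for x
    using nonneg[of x] by (simp add: \<Phi>_def)
  have inner_norm: "(LINT s|lborel. \<bar>\<Phi> x s\<bar>) = \<rho> x * \<bar>h x\<bar>" for x
    using nonneg[of x] by (simp add: \<Phi>_def abs_mult)
  have "integrable (lborel \<Otimes>\<^sub>M lborel) (case_prod \<Phi>)"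
  proof (rule lborel_pair.Fubini_integrable)
    show "integrable lborel (\<lambda>x. LINT y|lborel. norm (case_prod \<Phi> (x, y)))"
    proof (rule Bochner_Integration.integrable_bound[OF integrable])
      show "AE x in lborel. norm (LINT y|lborel. norm (case_prod \<Phi> (x, y))) \<le> norm (\<rho> x)"
      proof (rule AE_I2)
        fix x
        show "norm (LINT y|lborel. norm (case_prod \<Phi> (x, y))) \<le> norm (\<rho> x)"
          using mult_left_mono[OF bound[of x] nonneg[of x]] nonneg[of x] by (simp add: inner_norm)
      qed
    qed (simp add: inner_norm)
    show "AE x in lborel. integrable lborel (\<lambda>y. case_prod \<Phi> (x, y))"
      using nonneg by (simp add: \<Phi>_def)
  qed measurable
  from lborel_pair.integrable_snd[OF this] lborel_pair.Fubini_integral[OF this]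
  show "integrable lborel (\<lambda>s. LINT x|lborel. indicator {0<..<\<rho> x} s * h x)"
    and "(LINT x|lborel. \<rho> x * h x) = (LINT s|lborel. LINT x|lborel. indicator {0<..<\<rho> x} s * h x)"
    by (simp_all add: inner[symmetric]) (simp_all add: \<Phi>_def)
qed

lemma borel_measurable_continuous_comp_poly:
  fixes u :: "real \<Rightarrow> real"
  assumes "continuous_on UNIV u"
  shows "(\<lambda>x. u (t * poly f x)) \<in> borel_measurable borel"
  by (intro borel_measurable_continuous_onI continuous_on_compose2[OF assms] continuous_intros) auto

context normalized_log_concave_density
begin

lemma superlevel_oscillatory_integral_bound:
  fixes f :: "real poly" and u v :: "real \<Rightarrow> real"
  assumes s: "s > 0" and v: "\<And>y. (v has_real_derivative u y) (at y)"
    and u_bound: "\<And>y. \<bar>u y\<bar> \<le> 1" and v_bound: "\<And>y. \<bar>v y\<bar> \<le> 1" and u_cont: "continuous_on UNIV u"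
    and t: "t \<noteq> 0" and k: "1 \<le> k" and kd: "k \<le> degree f"
  shows "\<bar>LINT x:({x. 1 \<le> \<bar>poly ((pderiv ^^ k) f) x\<bar>} \<inter> {x. s < dens x})|lborel. u (t * poly f x)\<bar>
           \<le> 24 * real (degree f) * real k * \<bar>t\<bar> powr (- 1 / real k)"
proof (cases "{x. s < dens x} = {}")
  case False
  define A where "A = {x. 1 \<le> \<bar>poly ((pderiv ^^ k) f) x\<bar>}"
  define J where "J = {x. s < dens x}"
  have [measurable]: "A \<in> sets borel" "J \<in> sets borel"
    unfolding A_def J_def by (auto intro!: borel_closed closed_Collect_le continuous_intros)
  note borel_measurable_continuous_comp_poly[OF u_cont, measurable]
  have "emeasure lborel J < \<infinity>"
    using emeasure_superlevel_dens_le[OF s] by (simp add: J_def le_less_trans)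
  then obtain a b where ab: "a \<le> b" "{a<..<b} \<subseteq> J" "J \<subseteq> {a..b}"
    using convex_finite_measure_between[OF convex_superlevel_dens[OF s]] False by (auto simp: J_def)
  have "(LINT x:(A \<inter> J)|lborel. u (t * poly f x)) = (LINT x:(A \<inter> {a..b})|lborel. u (t * poly f x))"
  proof (rule set_integral_cong_set)
    show "AE x in lborel. (x \<in> A \<inter> {a..b}) = (x \<in> A \<inter> J)"
      using AE_lborel_singleton[of a] AE_lborel_singleton[of b] by eventually_elim (use ab in auto)
  qed (unfold set_borel_measurable_def; measurable)+
  then show ?thesis
    using oscillatory_set_integral_bound_on_interval[OF v u_bound v_bound u_cont t k kd ab(1)]
    by (simp add: A_def J_def)
qed (simp add: set_lebesgue_integral_def)

lemma layer_oscillatory_integral_bound: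
  fixes f :: "real poly" and u v :: "real \<Rightarrow> real"
  assumes dens_bound: "\<And>x. dens x \<le> 400" and v: "\<And>y. (v has_real_derivative u y) (at y)"
    and u_bound: "\<And>y. \<bar>u y\<bar> \<le> 1" and v_bound: "\<And>y. \<bar>v y\<bar> \<le> 1" and u_cont: "continuous_on UNIV u"
    and t: "t \<noteq> 0" and k: "1 \<le> k" and kd: "k \<le> degree f"
  shows "\<bar>LINT x|lborel. indicator {0<..<dens x} s
            * (indicator {x. 1 \<le> \<bar>poly ((pderiv ^^ k) f) x\<bar>} x * u (t * poly f x))\<bar>
           \<le> 24 * real (degree f) * real k * \<bar>t\<bar> powr (- 1 / real k) * indicator {0<..<400} s"
proof (cases "0 < s \<and> s < 400")
  case True
  then have "(LINT x|lborel. indicator {0<..<dens x} s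
        * (indicator {x. 1 \<le> \<bar>poly ((pderiv ^^ k) f) x\<bar>} x * u (t * poly f x)))
      = (LINT x:({x. 1 \<le> \<bar>poly ((pderiv ^^ k) f) x\<bar>} \<inter> {x. s < dens x})|lborel. u (t * poly f x))"
    unfolding set_lebesgue_integral_def
    by (intro Bochner_Integration.integral_cong) (auto simp: indicator_def)
  then show ?thesis
    using True superlevel_oscillatory_integral_bound[OF _ v u_bound v_bound u_cont t k kd, of s] by simp
next
  case False
  then have "indicator {0<..<dens x} s = (0::real)" for x
    using dens_bound[of x] by (auto simp: indicator_def)
  then show ?thesis using False by simp
qed

lemma oscillatory_integral_bound:
  fixes f :: "real poly" and u v :: "real \<Rightarrow> real"
  assumes dens_bound: "\<And>x. dens x \<le> 400" and v: "\<And>y. (v has_real_derivative u y) (at y)"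
    and u_bound: "\<And>y. \<bar>u y\<bar> \<le> 1" and v_bound: "\<And>y. \<bar>v y\<bar> \<le> 1" and u_cont: "continuous_on UNIV u"
    and t: "t \<noteq> 0" and k: "1 \<le> k" and kd: "k \<le> degree f"
  shows "\<bar>LINT x:{x. 1 \<le> \<bar>poly ((pderiv ^^ k) f) x\<bar>}|density lborel (\<lambda>x. ennreal (dens x)). u (t * poly f x)\<bar>
           \<le> 400 * (24 * real (degree f) * real k * \<bar>t\<bar> powr (- 1 / real k))"
proof -
  define B where "B = 24 * real (degree f) * real k * \<bar>t\<bar> powr (- 1 / real k)"
  define A where "A = {x. 1 \<le> \<bar>poly ((pderiv ^^ k) f) x\<bar>}"
  define h where "h x = indicator A x * u (t * poly f x)" for x
  note borel_measurable_continuous_comp_poly[OF u_cont, measurable]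
  have [measurable]: "A \<in> sets borel"
    unfolding A_def by (intro borel_closed closed_Collect_le continuous_intros)
  have [measurable]: "h \<in> borel_measurable borel" unfolding h_def by measurable
  have h_bound: "\<bar>h x\<bar> \<le> 1" for x using u_bound[of "t * poly f x"] by (simp add: h_def indicator_def)
  define G where "G s = (LINT x|lborel. indicator {0<..<dens x} s * h x)" for s
  have layer_cake: "integrable lborel G" "(LINT x|lborel. dens x * h x) = (LINT s|lborel. G s)"
    unfolding G_def[abs_def] using lborel_layer_cake[of dens h] dens_nonneg integrable_dens h_bound
    by simp_all
  have G_bound: "\<bar>G s\<bar> \<le> B * indicator {0<..<400} s" for s
    using layer_oscillatory_integral_bound[OF dens_bound v u_bound v_bound u_cont t k kd]
    by (simp add: G_def h_def A_def B_def)
  have "(LINT x:A|density lborel (\<lambda>x. ennreal (dens x)). u (t * poly f x)) = (LINT x|lborel. dens x * h x)"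
    unfolding set_lebesgue_integral_def using dens_nonneg by (subst integral_density) (auto simp: h_def)
  also have "\<dots> = (LINT s|lborel. G s)" by (rule layer_cake(2))
  finally have "\<bar>LINT x:A|density lborel (\<lambda>x. ennreal (dens x)). u (t * poly f x)\<bar>
      \<le> (LINT s|lborel. B * indicator {0<..<400::real} s)"
    using integral_abs_bound_integral[OF layer_cake(1) _ G_bound] by simp
  also have "\<dots> = 400 * B" by simp
  finally show ?thesis by (simp add: A_def B_def)
qed

end

lemma isotropic_density_moments:
  fixes \<rho> :: "real \<Rightarrow> real" and \<mu> :: "real measure"
  assumes iso: "isotropic \<mu>" and \<mu>: "\<mu> = density lborel (\<lambda>x. ennreal (\<rho> x))"
    and [measurable]: "\<rho> \<in> borel_measurable borel" and nonneg: "\<And>x. 0 \<le> \<rho> x"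
  shows "(\<integral>\<^sup>+x. ennreal (\<rho> x) \<partial>lborel) = 1"
    and "(\<integral>\<^sup>+x. ennreal (\<rho> x * (x - x0)\<^sup>2) \<partial>lborel) = ennreal (1 + x0\<^sup>2)"
proof -
  interpret prob_space \<mu> using iso by (simp add: isotropic_def)
  have moments: "integrable \<mu> (\<lambda>x. x)" "integrable \<mu> (\<lambda>x. x\<^sup>2)" "(\<integral>x. x \<partial>\<mu>) = 0" "(\<integral>x. x\<^sup>2 \<partial>\<mu>) = 1"
    using iso by (auto simp: isotropic_def)
  have "emeasure \<mu> UNIV = (\<integral>\<^sup>+x. ennreal (\<rho> x) * indicator UNIV x \<partial>lborel)"
    unfolding \<mu> by (rule emeasure_density) auto
  moreover have "emeasure \<mu> UNIV = 1" using emeasure_space_1 by (simp add: \<mu>)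
  ultimately show "(\<integral>\<^sup>+x. ennreal (\<rho> x) \<partial>lborel) = 1" by simp
  have expand: "(\<lambda>x. (x - x0)\<^sup>2) = (\<lambda>x. x\<^sup>2 - 2 * x0 * x + x0\<^sup>2)" by (auto simp: power2_eq_square algebra_simps)
  have "integrable \<mu> (\<lambda>x. (x - x0)\<^sup>2)" unfolding expand using moments by simp
  moreover have "(\<integral>x. (x - x0)\<^sup>2 \<partial>\<mu>) = 1 + x0\<^sup>2" unfolding expand using moments by (simp add: prob_space)
  ultimately have "(\<integral>\<^sup>+x. ennreal ((x - x0)\<^sup>2) \<partial>\<mu>) = ennreal (1 + x0\<^sup>2)"
    by (simp add: nn_integral_eq_integral)
  moreover have "(\<integral>\<^sup>+x. ennreal ((x - x0)\<^sup>2) \<partial>\<mu>) = (\<integral>\<^sup>+x. ennreal (\<rho> x * (x - x0)\<^sup>2) \<partial>lborel)"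
    unfolding \<mu> using nonneg by (subst nn_integral_density) (auto simp: ennreal_mult)
  ultimately show "(\<integral>\<^sup>+x. ennreal (\<rho> x * (x - x0)\<^sup>2) \<partial>lborel) = ennreal (1 + x0\<^sup>2)" by simp
qed

lemma isotropic_log_concave_oscillatory_integral_bound:
  fixes f :: "real poly" and u v :: "real \<Rightarrow> real" and \<mu> :: "real measure"
  assumes convex: "convex S" "convex_on S \<phi>"
    and \<mu>: "\<mu> = density lborel (\<lambda>x. ennreal (indicator S x * exp (- \<phi> x)))" and iso: "isotropic \<mu>"
    and v: "\<And>y. (v has_real_derivative u y) (at y)"
    and u_bound: "\<And>y. \<bar>u y\<bar> \<le> 1" and v_bound: "\<And>y. \<bar>v y\<bar> \<le> 1" and u_cont: "continuous_on UNIV u"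
    and t: "t \<noteq> 0" and k: "1 \<le> k" and kd: "k \<le> degree f"
  shows "\<bar>LINT x:{x. 1 \<le> \<bar>poly ((pderiv ^^ k) f) x\<bar>}|\<mu>. u (t * poly f x)\<bar>
           \<le> 9600 * real (degree f) * real k * \<bar>t\<bar> powr (- 1 / real k)"
proof -
  interpret log_concave_density S \<phi> using convex by unfold_locales
  have \<mu>': "\<mu> = density lborel (\<lambda>x. ennreal (dens x))" using \<mu> by (simp add: dens_def)
  note moments = isotropic_density_moments[OF iso \<mu>' borel_measurable_dens dens_nonneg]
  interpret normalized_log_concave_density S \<phi> using moments(1) by unfold_locales
  have "dens x \<le> 400" for x using moments(2)[of x] by (intro dens_le_400) simp
  then show ?thesis
    using oscillatory_integral_bound[OF _ v u_bound v_bound u_cont t k kd] \<mu>' by simp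
qed

lemma cmod_set_integral_cis_le:
  fixes g :: "'a \<Rightarrow> real"
  assumes "finite_measure M" and [measurable]: "A \<in> sets M" "g \<in> borel_measurable M"
    and cos: "\<bar>LINT x:A|M. cos (g x)\<bar> \<le> B" and sin: "\<bar>LINT x:A|M. sin (g x)\<bar> \<le> B"
  shows "cmod (LINT x:A|M. cis (g x)) \<le> 2 * B"
proof -
  interpret finite_measure M by fact
  have [measurable]: "cis \<in> borel_measurable borel"
    by (intro borel_measurable_continuous_onI continuous_intros)
  have "integrable M (\<lambda>x. indicator A x *\<^sub>R cis (g x))"
    by (rule integrable_const_bound[where B = 1]) (auto simp: indicator_def)
  then have "Re (LINT x:A|M. cis (g x)) = (LINT x:A|M. cos (g x))"
    and "Im (LINT x:A|M. cis (g x)) = (LINT x:A|M. sin (g x))"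
    unfolding set_lebesgue_integral_def
    by (subst integral_Re[symmetric] integral_Im[symmetric],
        auto simp: indicator_def intro!: Bochner_Integration.integral_cong)+
  then show ?thesis using cmod_le[of "LINT x:A|M. cis (g x)"] cos sin by linarith
qed

theorem lemma5p1:
  shows "\<exists>C>0. \<forall>(\<mu>::real measure) (f::real poly) (k::nat) (t::real).
     isotropic \<mu> \<and> log_concave_measure \<mu> \<and> 1 \<le> k \<and> k \<le> degree f \<and> t \<noteq> 0 \<longrightarrow>
     cmod (LINT x:{x. \<bar>poly ((pderiv ^^ k) f) x\<bar> \<ge> 1}|\<mu>. cis (t * poly f x))
       \<le> C * real (degree f) * real k * \<bar>t\<bar> powr (- 1 / real k)"
proof (intro exI[of _ 19200] conjI allI impI)
  fix \<mu> :: "real measure" and f :: "real poly" and k :: nat and t :: real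
  assume "isotropic \<mu> \<and> log_concave_measure \<mu> \<and> 1 \<le> k \<and> k \<le> degree f \<and> t \<noteq> 0"
  then have iso: "isotropic \<mu>" and lc: "log_concave_measure \<mu>" and k: "1 \<le> k" "k \<le> degree f"
    and t: "t \<noteq> 0" by auto
  obtain S \<phi> where convex: "convex S" "convex_on S \<phi>"
    and \<mu>: "\<mu> = density lborel (\<lambda>x. ennreal (indicator S x * exp (- \<phi> x)))"
    using lc unfolding log_concave_measure_def by blast
  let ?A = "{x. 1 \<le> \<bar>poly ((pderiv ^^ k) f) x\<bar>}"
  let ?B = "9600 * real (degree f) * real k * \<bar>t\<bar> powr (- 1 / real k)"
  have "\<bar>LINT x:?A|\<mu>. cos (t * poly f x)\<bar> \<le> ?B"
    by (rule isotropic_log_concave_oscillatory_integral_bound[OF convex \<mu> iso _ _ _ _ t k, where v = sin])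
      (auto intro!: derivative_eq_intros continuous_intros)
  moreover have "\<bar>LINT x:?A|\<mu>. sin (t * poly f x)\<bar> \<le> ?B"
    by (rule isotropic_log_concave_oscillatory_integral_bound[OF convex \<mu> iso _ _ _ _ t k,
          where v = "\<lambda>x. - cos x"])
      (auto intro!: derivative_eq_intros continuous_intros)
  moreover have "finite_measure \<mu>" using iso by (simp add: isotropic_def prob_space_def)
  moreover have "?A \<in> sets \<mu>" "(\<lambda>x. t * poly f x) \<in> borel_measurable \<mu>"
    unfolding \<mu> by (auto intro!: borel_closed closed_Collect_le continuous_intros
        borel_measurable_continuous_onI)
  ultimately have "cmod (LINT x:?A|\<mu>. cis (t * poly f x)) \<le> 2 * ?B"
    by (intro cmod_set_integral_cis_le)
  then show "cmod (LINT x:{x. \<bar>poly ((pderiv ^^ k) f) x\<bar> \<ge> 1}|\<mu>. cis (t * poly f x))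
       \<le> 19200 * real (degree f) * real k * \<bar>t\<bar> powr (- 1 / real k)"
    by (simp add: mult_ac)
qed simp

end
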